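(* Fix $\nu>1$ and write $F_{\text{exist}}=\nu(\nu+1)$, $F_{\text{2d}}=\nu(\nu+1)/\sqrt{\nu^2+\nu-1}$. For $\mu_L\ge0$, $k,\eta\in\mathbb{R}$, consider the roots $\lambda$ of $\det\big(G(-\infty;\lambda,\eta)-(ik+\mu_L)I\big)=0$ (the $\mu_L$-weighted dispersion relations at $-\infty$). (i) If $F_{\text{2d}}<F<F_{\text{exist}}$, then for every $\mu_L\ge0$ and every $R>0$ there exist $(k,\eta)$ with $k^2+\eta^2\ge R$ and a root $\lambda$ with $\Re\lambda>0$. (ii) If $2<F<F_{\text{2d}}$ and $$\mu_L\in\Big(\tfrac{F^2}{2}-\tfrac{F^2}{F_{\text{exist}}}-\tfrac{F}{F_{\text{2d}}}\sqrt{F_{\text{2d}}^2-F^2},\ \tfrac{F^2}{2}-\tfrac{F^2}{F_{\text{exist}}}+\tfrac{F}{F_{\text{2d}}}\sqrt{F_{\text{2d}}^2-F^2}\Big),$$ then this interval is contained in $(0,\infty)$, and there exists $R>0$ such that for all real $(k,\eta)$ with $k^2+\eta^2\ge R$ every root $\lambda$ satisfies $\Re\lambda<0$.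
   Context: $G(-\infty;\lambda,\eta)=(E-\lambda I-i\eta A_2)A_1^{-1}$ with, at $(H,Q)=(1,1)$ and $s=\frac{\nu^2+\nu+1}{\nu(\nu+1)}$, $A_1=\begin{pmatrix}-s&1&0\\ H/F^2-Q^2/H^2&2Q/H-s&0\\0&0&Q/H-s\end{pmatrix}$, $A_2=\begin{pmatrix}0&0&1\\0&0&Q/H\\ H/F^2&0&0\end{pmatrix}$, $E=\begin{pmatrix}0&0&0\\ 2Q^2/H^3+1&-2Q/H^2&0\\0&0&-Q/H^2\end{pmatrix}$. This is the limiting matrix at the upstream endstate $(1,1,0)$ of a hydraulic shock of the inviscid Saint-Venant equations with Froude number $F$ and downstream state $(\nu^{-2},\nu^{-3},0)$; $A_1$ is invertible for $F\neq F_{\text{exist}}$. *)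

theory Defs
  imports "HOL-Analysis.Analysis"
begin

text \<open>Saint-Venant hydraulic shock, limiting matrices at the upstream endstate.
  Parameters: nu (shock parameter, nu > 1), F (Froude number), H, Q (endstate).\<close>

definition sv_s :: "real \<Rightarrow> real" where
  "sv_s nu = (nu^2 + nu + 1) / (nu * (nu + 1))"

definition F_exist :: "real \<Rightarrow> real" where
  "F_exist nu = nu * (nu + 1)"

definition F_2d :: "real \<Rightarrow> real" where
  "F_2d nu = nu * (nu + 1) / sqrt (nu^2 + nu - 1)"

definition sv_A1 :: "real \<Rightarrow> real \<Rightarrow> real \<Rightarrow> real \<Rightarrow> complex^3^3" where
  "sv_A1 nu F H Q = (let s = sv_s nu in
     vector [vector [complex_of_real (- s), 1, 0],
             vector [complex_of_real (H / F^2 - Q^2 / H^2), complex_of_real (2*Q/H - s), 0],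
             vector [0, 0, complex_of_real (Q/H - s)]])"

definition sv_A2 :: "real \<Rightarrow> real \<Rightarrow> real \<Rightarrow> complex^3^3" where
  "sv_A2 F H Q =
     vector [vector [0, 0, 1],
             vector [0, 0, complex_of_real (Q/H)],
             vector [complex_of_real (H / F^2), 0, 0]]"

definition sv_E :: "real \<Rightarrow> real \<Rightarrow> complex^3^3" where
  "sv_E H Q =
     vector [vector [0, 0, 0],
             vector [complex_of_real (2*Q^2/H^3 + 1), complex_of_real (-2*Q/H^2), 0],
             vector [0, 0, complex_of_real (-Q/H^2)]]"

definition G_minf :: "real \<Rightarrow> real \<Rightarrow> complex \<Rightarrow> real \<Rightarrow> complex^3^3" where
  "G_minf nu F lam eta =
     (sv_E 1 1 - mat lam - mat (\<i> * complex_of_real eta) ** sv_A2 F 1 1)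
       ** matrix_inv (sv_A1 nu F 1 1)"

definition disp_root :: "real \<Rightarrow> real \<Rightarrow> real \<Rightarrow> real \<Rightarrow> real \<Rightarrow> complex \<Rightarrow> bool" where
  "disp_root nu F mu k eta lam \<longleftrightarrow>
     det (G_minf nu F lam eta - mat (\<i> * complex_of_real k + complex_of_real mu)) = 0"

end

theory Submission
  imports Defs
begin

(* Substituting w = lam - (i k + mu) / F_exist + 1 turns the dispersion relation into the depressed
   cubic w^3 + P w + q = 0 with P = C0 + f (k^2 + eta^2) + i k b, q = f eta^2, where f = 1 / F^2,
   b = 1 - 2 mu / F^2 and C0 = mu - mu^2 / F^2 - 1; the condition Re lam < 0 becomes Re w < g with
   g = 1 - mu / F_exist.  For a root w = x + i y and u = q / |w|^2 one has Re P = y^2 - x^2 - u x and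
   Im P = -y (2 x - u).  For large k^2 + eta^2 the sign of b^2 - 4 f (2 g - 1) decides: if it is
   negative, a root with x >= g would give (Im P)^2 Re P >= (2 g Re P - q)^2, which fails for large
   arguments; if it is positive, the two real equations can be solved with x > g and k^2 arbitrarily
   large (intermediate value theorem).  Up to the factor 4 / F^4 that sign is the sign of
   (mu - F^2/2 + F^2/F_exist)^2 - F^2 (1 - F^2 / F_2d^2), which produces the thresholds F_2d and
   the window of admissible mu. *)

lemma matrix_mul_diff_rdistrib: "((A::'a::ring_1^'n^'m) - B) ** C = A ** C - B ** C"
  by (simp add: vec_eq_iff matrix_matrix_mult_def sum_subtractf algebra_simps)

lemma det_mul_matrix_inv_sub_mat_eq_0_iff:
  fixes A X :: "'a::field^'n^'n"
  assumes "invertible A"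
  shows "det (X ** matrix_inv A - mat c) = 0 \<longleftrightarrow> det (X - mat c ** A) = 0"
proof -
  have "A ** matrix_inv A = mat 1"
    using assms unfolding invertible_def matrix_inv_def by (rule someI2_ex) simp
  then have "det A * det (matrix_inv A) = 1" and "mat c = (mat c ** A) ** matrix_inv A"
    by (metis det_I det_mul, simp add: matrix_mul_assoc[symmetric])
  then have "det (X ** matrix_inv A - mat c) = det (X - mat c ** A) * det (matrix_inv A)"
    and "det (matrix_inv A) \<noteq> 0"
    by (metis det_mul matrix_mul_diff_rdistrib, auto)
  then show ?thesis
    by simp
qed

lemma depressed_cubic_root_iff:
  fixes w P :: complex and u :: real
  assumes "w \<noteq> 0"
  shows "w^3 + P * w + of_real (u * (cmod w)^2) = 0 \<longleftrightarrow>
    Re P = (Im w)^2 - (Re w)^2 - u * Re w \<and> Im P = - Im w * (2 * Re w - u)"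
proof -
  have "of_real (u * (cmod w)^2) = of_real u * (w * cnj w)"
    by (simp only: of_real_mult complex_norm_square)
  then have "w^3 + P * w + of_real (u * (cmod w)^2) = w * (w^2 + P + u * cnj w)"
    by (simp add: algebra_simps power2_eq_square power3_eq_cube)
  then have "w^3 + P * w + of_real (u * (cmod w)^2) = 0 \<longleftrightarrow> w^2 + P + u * cnj w = 0"
    using assms by simp
  then show ?thesis
    by (auto simp: complex_eq_iff power2_eq_square algebra_simps)
qed

lemma depressed_cubic_Re_root_ge_imp:
  fixes w P :: complex and q g :: real
  assumes root: "w^3 + P * w + of_real q = 0"
    and q: "0 \<le> q" and P: "0 < Re P" and g: "0 < g" "g \<le> Re w"
    and S: "0 < 2 * g * Re P - q"
  shows "(2 * g * Re P - q)^2 \<le> (Im P)^2 * Re P"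
proof -
  define x y where "x = Re w" and "y = Im w"
  define u where "u = q / (cmod w)^2"
  have "w \<noteq> 0"
    using g by auto
  then have "q = u * (cmod w)^2"
    by (simp add: u_def)
  with root have "w^3 + P * w + of_real (u * (cmod w)^2) = 0"
    by (simp only:)
  then have ReP: "Re P = y^2 - x^2 - u * x" and ImP: "Im P = - y * (2 * x - u)"
    unfolding depressed_cubic_root_iff[OF \<open>w \<noteq> 0\<close>] x_def y_def by simp_all
  have "0 \<le> u"
    using q by (simp add: u_def)
  then have y2: "Re P \<le> y^2"
    using ReP g by (simp add: x_def) (smt (verit) mult_nonneg_nonneg zero_le_power2)
  then have "Re P \<le> (cmod w)^2"
    unfolding cmod_power2 y_def by (smt (verit) zero_le_power2)
  then have "u \<le> q / Re P"
    using q P by (simp add: u_def frac_le)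
  then have "(2 * g * Re P - q) / Re P \<le> 2 * x - u"
    using P g by (simp add: x_def diff_divide_distrib)
  then have "Re P * ((2 * g * Re P - q) / Re P)^2 \<le> y^2 * (2 * x - u)^2"
    using y2 S P by (intro mult_mono power_mono) auto
  also have "y^2 * (2 * x - u)^2 = (Im P)^2"
    by (simp add: ImP power_mult_distrib)
  finally show ?thesis
    using P by (simp add: power2_eq_square divide_le_eq)
qed

definition dispersion_cubic :: "real \<Rightarrow> real \<Rightarrow> real \<Rightarrow> real \<Rightarrow> real \<Rightarrow> complex \<Rightarrow> complex" where
  "dispersion_cubic f b C0 k eta w = w^3 + Complex (C0 + f * (k^2 + eta^2)) (k * b) * w + of_real (f * eta^2)"

lemma quadratic_form_lower_bound:
  fixes f beta b X rho :: real
  assumes f: "0 < f" and beta: "0 < beta" and b: "b^2 < 4 * f * beta" and X: "0 \<le> X" "X \<le> rho"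
  shows "(1 - b^2 / (4 * f * beta)) * (f * beta * rho)^2 \<le> (f * (beta * rho + X))^2 - f * b^2 * rho * X"
proof -
  define t where "t = b^2 / (4 * f * beta)"
  have t: "0 \<le> t" "t \<le> 1"
    using f beta b by (simp_all add: t_def)
  have amgm: "4 * beta * rho * X \<le> (beta * rho + X)^2"
    using zero_le_power2[of "beta * rho - X"] by (simp add: power2_eq_square algebra_simps)
  have mono: "(beta * rho)^2 \<le> (beta * rho + X)^2"
    using beta X by (intro power_mono) auto
  have "t * (4 * beta * rho * X) + (1 - t) * (beta * rho)^2
      \<le> t * (beta * rho + X)^2 + (1 - t) * (beta * rho + X)^2"
    using t amgm mono by (intro add_mono mult_left_mono) auto
  also have "\<dots> = (beta * rho + X)^2"
    by (simp add: algebra_simps)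
  finally have "f^2 * (t * (4 * beta * rho * X)) + f^2 * ((1 - t) * (beta * rho)^2) \<le> f^2 * (beta * rho + X)^2"
    by (simp add: mult_left_mono flip: distrib_left)
  moreover have "f^2 * (t * (4 * beta * rho * X)) = f * b^2 * rho * X"
    using f beta by (simp add: t_def power2_eq_square field_simps)
  moreover have "f^2 * ((1 - t) * (beta * rho)^2) = (1 - t) * (f * beta * rho)^2"
    by (simp add: power_mult_distrib)
  moreover have "f^2 * (beta * rho + X)^2 = (f * (beta * rho + X))^2"
    by (simp add: power_mult_distrib)
  ultimately show ?thesis
    unfolding t_def by linarith
qed

lemma coeff_ineq_lower_bound:
  fixes f beta b C0 :: real
  assumes f: "0 < f" and beta: "0 < beta" and b: "b^2 < 4 * f * beta"
  shows "\<exists>eps>0. \<exists>K. \<forall>rho X. 0 \<le> X \<longrightarrow> X \<le> rho \<longrightarrow>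
    rho * (eps * rho - K)
      \<le> ((beta + 1) * (C0 + f * rho) - f * (rho - X))^2 - (C0 + f * rho) * (X * b^2)"
proof (intro exI conjI allI impI)
  define D where "D = (beta + 1) * C0"
  define eps where "eps = (1 - b^2 / (4 * f * beta)) * (f * beta)^2"
  define K where "K = 2 * \<bar>D\<bar> * f * (beta + 1) + \<bar>C0\<bar> * b^2"
  show "0 < eps"
    using f beta b by (simp add: eps_def)
  fix rho X :: real
  assume X: "0 \<le> X" "X \<le> rho"
  define Y where "Y = f * (beta * rho + X)"
  have Y: "0 \<le> Y" "Y \<le> f * (beta + 1) * rho"
    using f beta X mult_left_mono[OF X(2), of f] by (simp_all add: Y_def algebra_simps)
  have "eps * rho^2 \<le> Y^2 - f * b^2 * rho * X"
    using quadratic_form_lower_bound[OF f beta b X] by (simp add: Y_def eps_def power_mult_distrib)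
  moreover have "- \<bar>D\<bar> * Y \<le> D * Y"
    using Y(1) by (intro mult_right_mono) auto
  moreover have "\<bar>D\<bar> * Y \<le> \<bar>D\<bar> * (f * (beta + 1) * rho)"
    using Y(2) by (intro mult_left_mono) auto
  moreover have "C0 * (X * b^2) \<le> \<bar>C0\<bar> * (X * b^2)"
    using X by (intro mult_right_mono) auto
  moreover have "\<bar>C0\<bar> * (X * b^2) \<le> \<bar>C0\<bar> * (rho * b^2)"
    using X by (intro mult_left_mono mult_right_mono) auto
  moreover have "((beta + 1) * (C0 + f * rho) - f * (rho - X))^2 - (C0 + f * rho) * (X * b^2)
      = (Y^2 - f * b^2 * rho * X) + 2 * (D * Y) + D^2 - C0 * (X * b^2)"
    by (simp add: D_def Y_def power2_eq_square algebra_simps)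
  moreover have "rho * (eps * rho - K)
      = eps * rho^2 - 2 * (\<bar>D\<bar> * (f * (beta + 1) * rho)) - \<bar>C0\<bar> * (rho * b^2)"
    by (simp add: K_def power2_eq_square algebra_simps)
  ultimately show "rho * (eps * rho - K)
      \<le> ((beta + 1) * (C0 + f * rho) - f * (rho - X))^2 - (C0 + f * rho) * (X * b^2)"
    using zero_le_power2[of D] by linarith
qed

lemma coeff_ineq_for_large_rho:
  fixes f beta b C0 :: real
  assumes f: "0 < f" and beta: "0 < beta" and b: "b^2 < 4 * f * beta"
  shows "\<exists>R. \<forall>rho X. R \<le> rho \<longrightarrow> 0 \<le> X \<longrightarrow> X \<le> rho \<longrightarrow>
    0 < C0 + f * rho \<and> 0 < (beta + 1) * (C0 + f * rho) - f * (rho - X) \<and>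
    (C0 + f * rho) * (X * b^2) < ((beta + 1) * (C0 + f * rho) - f * (rho - X))^2"
proof -
  obtain eps K where eps: "0 < eps" and bound: "\<And>rho X. 0 \<le> X \<Longrightarrow> X \<le> rho \<Longrightarrow>
      rho * (eps * rho - K)
        \<le> ((beta + 1) * (C0 + f * rho) - f * (rho - X))^2 - (C0 + f * rho) * (X * b^2)"
    using coeff_ineq_lower_bound[OF f beta b, of C0] by blast
  define D where "D = (beta + 1) * C0"
  define R where "R = max ((\<bar>C0\<bar> + 1) / f) (max ((\<bar>D\<bar> + 1) / (f * beta)) ((\<bar>K\<bar> + 1) / eps))"
  show ?thesis
  proof (intro exI[of _ R] allI impI conjI)
    fix rho X :: real
    assume R: "R \<le> rho" and X: "0 \<le> X" "X \<le> rho"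
    have "\<bar>C0\<bar> + 1 \<le> f * rho" "\<bar>D\<bar> + 1 \<le> f * beta * rho" "\<bar>K\<bar> + 1 \<le> eps * rho"
      using R f beta eps by (simp_all add: R_def field_simps)
    moreover have "0 \<le> f * X"
      using f X by simp
    moreover have "(beta + 1) * (C0 + f * rho) - f * (rho - X) = D + f * beta * rho + f * X"
      by (simp add: D_def algebra_simps)
    ultimately show "0 < C0 + f * rho" and "0 < (beta + 1) * (C0 + f * rho) - f * (rho - X)"
      using abs_ge_minus_self[of C0] abs_ge_minus_self[of D] by linarith+
    have "0 < eps * rho" and "K < eps * rho"
      using \<open>\<bar>K\<bar> + 1 \<le> eps * rho\<close> by linarith+
    then have "0 < rho * (eps * rho - K)"
      using eps by (simp add: zero_less_mult_iff)
    then show "(C0 + f * rho) * (X * b^2) < ((beta + 1) * (C0 + f * rho) - f * (rho - X))^2"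
      using bound[OF X] by linarith
  qed
qed

lemma dispersion_cubic_roots_left_of:
  fixes f b C0 g :: real
  assumes f: "0 < f" and g: "0 < 2 * g - 1" and b: "b^2 < 4 * f * (2 * g - 1)"
  shows "\<exists>R>0. \<forall>k eta. R \<le> k^2 + eta^2 \<longrightarrow> (\<forall>w. dispersion_cubic f b C0 k eta w = 0 \<longrightarrow> Re w < g)"
proof -
  obtain R where R: "\<And>rho X. R \<le> rho \<Longrightarrow> 0 \<le> X \<Longrightarrow> X \<le> rho \<Longrightarrow>
      0 < C0 + f * rho \<and> 0 < 2 * g * (C0 + f * rho) - f * (rho - X) \<and>
      (C0 + f * rho) * (X * b^2) < (2 * g * (C0 + f * rho) - f * (rho - X))^2"
    using coeff_ineq_for_large_rho[OF f g b, of C0] by auto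
  have "\<forall>k eta. max R 1 \<le> k^2 + eta^2 \<longrightarrow> (\<forall>w. dispersion_cubic f b C0 k eta w = 0 \<longrightarrow> Re w < g)"
  proof (intro allI impI)
    fix k eta :: real and w :: complex
    assume "max R 1 \<le> k^2 + eta^2" and root: "dispersion_cubic f b C0 k eta w = 0"
    define P where "P = Complex (C0 + f * (k^2 + eta^2)) (k * b)"
    have "0 < Re P" and S: "0 < 2 * g * Re P - f * eta^2" and ineq: "Re P * (k^2 * b^2) < (2 * g * Re P - f * eta^2)^2"
      using R[of "k^2 + eta^2" "k^2"] \<open>max R 1 \<le> k^2 + eta^2\<close> by (simp_all add: P_def)
    show "Re w < g"
    proof (rule ccontr)
      assume "\<not> Re w < g"
      then have "(2 * g * Re P - f * eta^2)^2 \<le> (Im P)^2 * Re P"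
        using depressed_cubic_Re_root_ge_imp[of w P "f * eta^2" g] root f g \<open>0 < Re P\<close> S
        by (simp add: dispersion_cubic_def P_def)
      then show False
        using ineq by (simp add: P_def power_mult_distrib algebra_simps)
    qed
  qed
  then show ?thesis
    by (intro exI[of _ "max R 1"]) auto
qed

lemma dispersion_cubic_root_of_parts:
  assumes "k * b = - y * (2 * x - u)" "f * eta^2 = u * (x^2 + y^2)"
    and "C0 + f * k^2 + u * (x^2 + y^2) = y^2 - x^2 - u * x"
  shows "dispersion_cubic f b C0 k eta (Complex x y) = 0"
proof -
  have Re_coeff: "C0 + f * (k^2 + eta^2) = y^2 - x^2 - u * x"
    using assms(2,3) by (simp add: algebra_simps)
  show ?thesis
    unfolding dispersion_cubic_def Re_coeff assms(1,2)
    by (simp add: complex_eq_iff power3_eq_cube power2_eq_square algebra_simps)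
qed

lemma dispersion_cubic_root_on_curve:
  fixes f a b u x Y C0 :: real
  assumes f: "0 < f" and b: "b \<noteq> 0" and ab: "f * a^2 = b^2" and u: "0 \<le> u" and Y: "0 \<le> Y"
    and curve: "Y * (1 - u - (2 * x - u)^2 / a^2) = (1 + u) * x^2 + u * x + C0"
  shows "\<exists>k eta. k^2 = Y * (2 * x - u)^2 / b^2 \<and> dispersion_cubic f b C0 k eta (Complex x (sqrt Y)) = 0"
proof -
  define y where "y = sqrt Y"
  define k where "k = - y * (2 * x - u) / b"
  define eta where "eta = sqrt (u * (x^2 + y^2) / f)"
  have y2: "y^2 = Y"
    using Y by (simp add: y_def)
  have k2: "k^2 = Y * (2 * x - u)^2 / b^2"
    by (simp add: k_def y2 power_divide power_mult_distrib)
  have "f * k^2 = Y * (2 * x - u)^2 / a^2"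
    using b f by (simp add: k2 flip: ab)
  then have "C0 + f * k^2 + u * (x^2 + y^2) = y^2 - x^2 - u * x"
    using curve by (simp add: y2 algebra_simps)
  moreover have "f * eta^2 = u * (x^2 + y^2)"
    using f u by (simp add: eta_def)
  moreover have "k * b = - y * (2 * x - u)"
    using b by (simp add: k_def)
  ultimately show ?thesis
    using k2 dispersion_cubic_root_of_parts unfolding y_def by blast
qed

(* With k = -y (2 x - u) / b and f a^2 = b^2, the real part of the root equations reads
   y^2 (c^2 - (2 x - u)^2 / a^2) = (1 + u) x^2 + u x + C0.  The bracket vanishes at
   x = (u + a c) / 2, so y, and with it k, blows up as x approaches this point from the left. *)
lemma dispersion_cubic_roots_near_branch:
  fixes a c u f b C0 g :: real
  assumes a: "0 < a" and c: "0 < c" "c \<le> 1" and u: "u = 1 - c^2"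
    and f: "0 < f" and b: "b \<noteq> 0" and ab: "f * a^2 = b^2"
    and g: "g < (u + a * c) / 2"
    and N: "0 < (1 + u) * ((u + a * c) / 2)^2 + u * ((u + a * c) / 2) + C0"
  shows "\<exists>Y0. \<forall>Y\<ge>Y0. \<exists>x k eta. g < x \<and> a * c / 2 \<le> 2 * x - u \<and> k^2 = Y * (2 * x - u)^2 / b^2
    \<and> dispersion_cubic f b C0 k eta (Complex x (sqrt Y)) = 0"
proof -
  define xs where "xs = (u + a * c) / 2"
  define D where "D = (\<lambda>x::real. c^2 - (2 * x - u)^2 / a^2)"
  define N where "N = (\<lambda>x::real. (1 + u) * x^2 + u * x + C0)"
  have "0 \<le> u" "0 < a * c"
    using a c by (simp_all add: u power_le_one)
  define m where "m = max g (u / 2)"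
  have m: "g \<le> m" "u / 2 \<le> m" "m < xs"
    using g \<open>0 < a * c\<close> by (auto simp: m_def xs_def)
  define x1 where "x1 = (m + xs) / 2"
  have x1: "g < x1" "x1 \<le> xs" "a * c / 2 \<le> 2 * x1 - u" "2 * x1 - u < a * c"
    using m by (simp_all add: x1_def xs_def field_simps)
  have "(2 * x1 - u)^2 < (a * c)^2"
    using x1 \<open>0 < a * c\<close> by (intro power_strict_mono) auto
  then have "0 < D x1"
    using a by (simp add: D_def power_mult_distrib divide_less_eq mult.commute)
  have "2 * xs - u = a * c"
    by (simp add: xs_def field_simps)
  then have "D xs = 0"
    using a by (simp add: D_def power_mult_distrib)
  show ?thesis
  proof (rule exI[of _ "max 0 ((\<bar>N x1\<bar> + 1) / D x1)"], intro allI impI)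
    fix Y :: real
    assume Y: "max 0 ((\<bar>N x1\<bar> + 1) / D x1) \<le> Y"
    then have "\<bar>N x1\<bar> + 1 \<le> Y * D x1"
      using \<open>0 < D x1\<close> by (simp add: pos_divide_le_eq)
    then have "N x1 \<le> Y * D x1"
      by linarith
    moreover have "Y * D xs \<le> N xs"
      using N \<open>D xs = 0\<close> by (simp add: N_def xs_def)
    moreover have "continuous_on {x1..xs} (\<lambda>x. Y * D x - N x)"
      unfolding D_def N_def by (intro continuous_intros) (use a in auto)
    ultimately obtain x where x: "x1 \<le> x" "Y * D x - N x = 0"
      using IVT2'[of "\<lambda>x. Y * D x - N x" xs 0 x1] x1(2) by auto
    then have "Y * (1 - u - (2 * x - u)^2 / a^2) = (1 + u) * x^2 + u * x + C0"
      by (simp add: D_def N_def u)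
    moreover have "0 \<le> Y"
      using Y by simp
    ultimately obtain k eta where "k^2 = Y * (2 * x - u)^2 / b^2"
      and "dispersion_cubic f b C0 k eta (Complex x (sqrt Y)) = 0"
      using dispersion_cubic_root_on_curve[OF f b ab \<open>0 \<le> u\<close>] by blast
    moreover have "g < x" "a * c / 2 \<le> 2 * x - u"
      using x(1) x1(1,3) by linarith+
    ultimately show "\<exists>x k eta. g < x \<and> a * c / 2 \<le> 2 * x - u \<and> k^2 = Y * (2 * x - u)^2 / b^2
        \<and> dispersion_cubic f b C0 k eta (Complex x (sqrt Y)) = 0"
      by blast
  qed
qed

lemma dispersion_cubic_large_root_nonzero_b:
  fixes a c u f b C0 g R :: real
  assumes a: "0 < a" and c: "0 < c" "c \<le> 1" and u: "u = 1 - c^2"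
    and f: "0 < f" and b: "b \<noteq> 0" and ab: "f * a^2 = b^2"
    and g: "g < (u + a * c) / 2"
    and N: "0 < (1 + u) * ((u + a * c) / 2)^2 + u * ((u + a * c) / 2) + C0"
  shows "\<exists>k eta w. R \<le> k^2 + eta^2 \<and> dispersion_cubic f b C0 k eta w = 0 \<and> g < Re w"
proof -
  obtain Y0 where Y0: "\<And>Y. Y0 \<le> Y \<Longrightarrow> \<exists>x k eta. g < x \<and> a * c / 2 \<le> 2 * x - u
      \<and> k^2 = Y * (2 * x - u)^2 / b^2 \<and> dispersion_cubic f b C0 k eta (Complex x (sqrt Y)) = 0"
    using dispersion_cubic_roots_near_branch[OF assms] by blast
  define Y where "Y = max Y0 (max R 0 * 4 * b^2 / (a * c)^2)"
  obtain x k eta where x: "g < x" "a * c / 2 \<le> 2 * x - u" and k: "k^2 = Y * (2 * x - u)^2 / b^2"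
    and root: "dispersion_cubic f b C0 k eta (Complex x (sqrt Y)) = 0"
    using Y0[of Y] by (auto simp: Y_def)
  have "0 < a * c"
    using a c by simp
  have Y: "max R 0 * 4 * b^2 / (a * c)^2 \<le> Y"
    by (simp add: Y_def)
  moreover have "0 \<le> max R 0 * 4 * b^2 / (a * c)^2"
    by simp
  ultimately have "0 \<le> Y"
    by linarith
  with Y have "(max R 0 * 4 * b^2 / (a * c)^2) * (a * c / 2)^2 / b^2 \<le> k^2"
    unfolding k using x(2) \<open>0 < a * c\<close>
    by (intro divide_right_mono mult_mono power_mono) auto
  also have "(max R 0 * 4 * b^2 / (a * c)^2) * (a * c / 2)^2 / b^2 = max R 0"
    using a c b by (simp add: power_divide field_simps)
  finally have "R \<le> k^2 + eta^2"
    using zero_le_power2[of eta] by linarith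
  then show ?thesis
    using root x(1) by (intro exI[of _ k] exI[of _ eta] exI[of _ "Complex x (sqrt Y)"]) auto
qed

lemma dispersion_cubic_large_root_zero_b:
  fixes f C0 g R :: real
  assumes f: "0 < f" and C0: "0 < C0" and g: "g < 1 / 2"
  shows "\<exists>k eta w. R \<le> k^2 + eta^2 \<and> dispersion_cubic f 0 C0 k eta w = 0 \<and> g < Re w"
proof -
  define x where "x = (max g 0 + 1 / 2) / 2"
  have x: "g < x" "0 \<le> x" "x < 1 / 2"
    using g max.cobounded1[of g 0] max.cobounded2[of 0 g] by (simp_all add: x_def field_simps)
  define k where "k = sqrt (max R 0)"
  have "R \<le> k^2"
    by (simp add: k_def)
  define Y where "Y = (C0 + f * k^2 + 3 * x^2 + 2 * x^3) / (1 - 2 * x)"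
  have "0 \<le> Y"
    using C0 f x by (simp add: Y_def)
  define y where "y = sqrt Y"
  have y2: "y^2 = Y"
    using \<open>0 \<le> Y\<close> by (simp add: y_def)
  define eta where "eta = sqrt (2 * x * (x^2 + y^2) / f)"
  have "C0 + f * k^2 + 2 * x * (x^2 + y^2) = y^2 - x^2 - 2 * x * x"
    using x unfolding y2 Y_def by (simp add: field_simps power2_eq_square power3_eq_cube)
  moreover have "f * eta^2 = 2 * x * (x^2 + y^2)"
    using f x by (simp add: eta_def)
  ultimately have "dispersion_cubic f 0 C0 k eta (Complex x y) = 0"
    by (intro dispersion_cubic_root_of_parts) simp_all
  moreover have "R \<le> k^2 + eta^2"
    using \<open>R \<le> k^2\<close> zero_le_power2[of eta] by linarith
  ultimately show ?thesis
    using x by (intro exI[of _ k] exI[of _ eta] exI[of _ "Complex x y"]) auto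
qed

lemma dispersion_cubic_large_roots_right_of:
  fixes f b g R :: real
  assumes f: "0 < f" "4 * f < 1" and g: "g \<le> 1" and b: "4 * f * (2 * g - 1) < b^2"
  shows "\<exists>k eta w. R \<le> k^2 + eta^2 \<and> dispersion_cubic f b ((1 - b^2) / (4 * f) - 1) k eta w = 0
    \<and> g < Re w"
proof (cases "b = 0")
  case True
  have "0 < (1 - b^2) / (4 * f) - 1" "g < 1 / 2"
    using f b by (simp_all add: True field_simps)
  then show ?thesis
    using dispersion_cubic_large_root_zero_b[OF f(1)] True by blast
next
  case False
  define v where "v = b^2 / (4 * f)"
  define a where "a = 2 * sqrt v"
  have v: "0 < v" "2 * g - 1 < v"
    using f b False by (simp_all add: v_def field_simps)
  have "0 < a" "f * a^2 = b^2"
    using v f by (simp_all add: a_def v_def power_mult_distrib)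
  have C0: "(1 - b^2) / (4 * f) - 1 = 1 / (4 * f) - v - 1"
    using f by (simp add: v_def field_simps)
  have "4 < 1 / f"
    using f by (simp add: field_simps)
  show ?thesis
  proof (cases "v \<le> 1")
    case True
    define c where "c = sqrt v"
    have c: "0 < c" "c \<le> 1" "1 - v = 1 - c^2" "a * c = 2 * v"
      using v True by (simp_all add: c_def a_def)
    have "v + 2 * v^2 + v^3 \<le> 4"
      using v True power_le_one[of v 2] power_le_one[of v 3] by simp
    then have "0 < (1 + (1 - v)) * ((1 - v + a * c) / 2)^2 + (1 - v) * ((1 - v + a * c) / 2)
        + ((1 - b^2) / (4 * f) - 1)"
      using \<open>4 < 1 / f\<close> unfolding c(4) C0
      by (simp add: power2_eq_square power3_eq_cube field_simps)
    moreover have "g < (1 - v + a * c) / 2"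
      using v by (simp add: c(4))
    ultimately show ?thesis
      using dispersion_cubic_large_root_nonzero_b[OF \<open>0 < a\<close> c(1,2,3) f(1) False \<open>f * a^2 = b^2\<close>]
      by blast
  next
    case False
    have "2 < a"
      using False real_sqrt_less_mono[of 1 v] by (simp add: a_def)
    have "0 < (1 + 0) * ((0 + a * 1) / 2)^2 + 0 * ((0 + a * 1) / 2) + ((1 - b^2) / (4 * f) - 1)"
      using \<open>4 < 1 / f\<close> v unfolding C0 by (simp add: a_def power_mult_distrib)
    moreover have "g < (0 + a * 1) / 2"
      using g \<open>2 < a\<close> by simp
    ultimately show ?thesis
      using dispersion_cubic_large_root_nonzero_b[OF \<open>0 < a\<close> _ _ _ f(1) \<open>b \<noteq> 0\<close> \<open>f * a^2 = b^2\<close>, of 1 0]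
      by simp
  qed
qed

lemma F_exist_gt_2: "1 < nu \<Longrightarrow> 2 < F_exist nu"
  unfolding F_exist_def by (rule mult_strict_mono[of 1 nu 2, simplified]) auto

lemma sv_s_eq: "1 < nu \<Longrightarrow> sv_s nu = 1 + 1 / F_exist nu"
  using F_exist_gt_2[of nu] by (simp add: sv_s_def F_exist_def field_simps power2_eq_square)

lemma F_2d_sq: "1 < nu \<Longrightarrow> (F_2d nu)^2 = (F_exist nu)^2 / (F_exist nu - 1)"
proof -
  assume nu: "1 < nu"
  have "nu^2 + nu - 1 = F_exist nu - 1"
    by (simp add: F_exist_def power2_eq_square algebra_simps)
  moreover have "0 < F_exist nu - 1"
    using F_exist_gt_2[OF nu] by simp
  ultimately show ?thesis
    by (simp add: F_2d_def power_divide F_exist_def)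
qed

lemma F_2d_pos: "1 < nu \<Longrightarrow> 0 < F_2d nu"
proof -
  assume "1 < nu"
  then have "1 * 1 < nu * nu"
    by (intro mult_strict_mono) auto
  then show ?thesis
    using \<open>1 < nu\<close> by (simp add: F_2d_def power2_eq_square)
qed

lemma two_le_F_2d: "1 < nu \<Longrightarrow> 2 \<le> F_2d nu"
proof -
  assume nu: "1 < nu"
  define E where "E = F_exist nu"
  have "2 < E" and D: "(F_2d nu)^2 = E^2 / (E - 1)"
    using F_exist_gt_2[OF nu] F_2d_sq[OF nu] by (simp_all add: E_def)
  have "E^2 - 4 * (E - 1) = (E - 2)^2"
    by (simp add: power2_eq_square algebra_simps)
  then have "4 * (E - 1) \<le> E^2"
    using zero_le_power2[of "E - 2"] by linarith
  then have "2^2 \<le> (F_2d nu)^2"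
    using \<open>2 < E\<close> by (simp add: D le_divide_eq)
  then show ?thesis
    using power2_le_imp_le F_2d_pos[OF nu] by (metis less_imp_le)
qed

lemma F_2d_less_F_exist: "1 < nu \<Longrightarrow> F_2d nu < F_exist nu"
proof -
  assume nu: "1 < nu"
  define E where "E = F_exist nu"
  have "2 < E" and D: "(F_2d nu)^2 = E^2 / (E - 1)"
    using F_exist_gt_2[OF nu] F_2d_sq[OF nu] by (simp_all add: E_def)
  then have "(F_2d nu)^2 < E^2"
    by (simp add: divide_less_eq)
  then show ?thesis
    using \<open>2 < E\<close> power_less_imp_less_base[of "F_2d nu" 2 E] by (simp add: E_def)
qed

lemma sv_discriminant_eq:
  assumes nu: "1 < nu" and F: "F \<noteq> 0"
  shows "(1 - 2 * mu / F^2)^2 - 4 * (1 / F^2) * (2 * (1 - mu / F_exist nu) - 1)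
    = 4 / F^4 * ((mu - (F^2 / 2 - F^2 / F_exist nu))^2 - (F^2 - F^4 / (F_2d nu)^2))"
proof -
  define E where "E = F_exist nu"
  have "E \<noteq> 0"
    using F_exist_gt_2[OF nu] by (simp add: E_def)
  have "(1 - 2 * mu / F^2)^2 - 4 * (1 / F^2) * (2 * (1 - mu / E) - 1)
      = 4 / F^4 * ((F^2 / 2 - mu)^2 - F^2 * (1 - 2 * mu / E))"
    using F by (simp add: field_simps power2_eq_square power4_eq_xxxx)
  also have "(F^2 / 2 - mu)^2 - F^2 * (1 - 2 * mu / E) = (mu - (F^2 / 2 - F^2 / E))^2 - (F^2 - F^4 * (E - 1) / E^2)"
    using \<open>E \<noteq> 0\<close> by (simp add: power2_eq_square field_simps) (simp add: algebra_simps power2_eq_square power4_eq_xxxx)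
  also have "F^4 * (E - 1) / E^2 = F^4 / (F_2d nu)^2"
    using F_exist_gt_2[OF nu] by (simp add: F_2d_sq[OF nu] E_def)
  finally show ?thesis
    unfolding E_def .
qed

lemma det_sv_A1:
  "1 < nu \<Longrightarrow> det (sv_A1 nu F 1 1) = of_real ((1 / F^2 - 1 / (F_exist nu)^2) / F_exist nu)"
  using F_exist_gt_2[of nu]
  by (simp add: sv_A1_def det_3 Let_def sv_s_eq) (simp add: field_simps power2_eq_square)

lemma invertible_sv_A1:
  assumes "1 < nu" "0 < F" "F \<noteq> F_exist nu"
  shows "invertible (sv_A1 nu F 1 1)"
proof -
  have "F^2 \<noteq> (F_exist nu)^2"
    using assms F_exist_gt_2[of nu] by (simp add: power2_eq_iff_nonneg)
  then have "(1 / F^2 - 1 / (F_exist nu)^2) / F_exist nu \<noteq> 0"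
    using F_exist_gt_2[OF assms(1)] by simp
  then show ?thesis
    unfolding invertible_det_nz det_sv_A1[OF assms(1)] of_real_eq_0_iff .
qed

lemma det_sv_numerator:
  assumes "1 < nu" "F \<noteq> 0"
  shows "det (sv_E 1 1 - mat lam - mat (\<i> * of_real eta) ** sv_A2 F 1 1 - mat c ** sv_A1 nu F 1 1)
    = - ((lam - c / F_exist nu + 1)^3 + (c - c^2/F^2 - 1 + eta^2/F^2) * (lam - c / F_exist nu + 1)
         + eta^2/F^2)"
  using assms F_exist_gt_2[of nu]
  by (simp add: sv_A1_def sv_A2_def sv_E_def det_3 Let_def sv_s_eq matrix_matrix_mult_def sum_3 mat_def)
     (simp add: field_simps power2_eq_square power3_eq_cube)

lemma disp_root_iff_dispersion_cubic:
  assumes nu: "1 < nu" and F: "0 < F" "F \<noteq> F_exist nu"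
  shows "disp_root nu F mu k eta lam \<longleftrightarrow>
    dispersion_cubic (1 / F^2) (1 - 2 * mu / F^2) (mu - mu^2 / F^2 - 1) k eta
      (lam - (\<i> * of_real k + of_real mu) / of_real (F_exist nu) + 1) = 0"
proof -
  define c where "c = \<i> * of_real k + of_real mu"
  have "F \<noteq> 0"
    using F by simp
  have coeff: "c - c^2/F^2 - 1 + eta^2/F^2
      = Complex (mu - mu^2/F^2 - 1 + 1/F^2 * (k^2+eta^2)) (k * (1 - 2*mu/F^2))"
    using F by (simp add: c_def complex_eq_iff power2_eq_square field_simps)
  have "disp_root nu F mu k eta lam \<longleftrightarrow>
      det (sv_E 1 1 - mat lam - mat (\<i> * of_real eta) ** sv_A2 F 1 1 - mat c ** sv_A1 nu F 1 1) = 0"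
    unfolding disp_root_def G_minf_def c_def
    by (rule det_mul_matrix_inv_sub_mat_eq_0_iff[OF invertible_sv_A1[OF nu F]])
  also have "\<dots> \<longleftrightarrow> dispersion_cubic (1 / F^2) (1 - 2 * mu / F^2) (mu - mu^2 / F^2 - 1) k eta
      (lam - c / of_real (F_exist nu) + 1) = 0"
    using F unfolding det_sv_numerator[OF nu \<open>F \<noteq> 0\<close>] dispersion_cubic_def coeff[symmetric]
    by (subst neg_equal_0_iff_equal) simp
  finally show ?thesis
    unfolding c_def .
qed

lemma disp_roots_unstable_above_F_2d:
  assumes nu: "1 < nu" and F: "F_2d nu < F" "F < F_exist nu" and mu: "0 \<le> mu"
  shows "\<exists>k eta. R \<le> k^2 + eta^2 \<and> (\<exists>lam. disp_root nu F mu k eta lam \<and> 0 < Re lam)"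
proof -
  define E f b g where "E = F_exist nu" and "f = 1 / F^2" and "b = 1 - 2 * mu / F^2"
    and "g = 1 - mu / E"
  have "2 < F" "0 < E"
    using F two_le_F_2d[OF nu] F_exist_gt_2[OF nu] by (simp_all add: E_def)
  have "(F_2d nu)^2 < F^2"
    using F F_2d_pos[OF nu] by (simp add: power_strict_mono)
  then have "F^2 < F^4 / (F_2d nu)^2"
    using F_2d_pos[OF nu] \<open>2 < F\<close> by (simp add: less_divide_eq power2_eq_square power4_eq_xxxx)
  then have "0 < (mu - (F^2 / 2 - F^2 / E))^2 - (F^2 - F^4 / (F_2d nu)^2)"
    using zero_le_power2[of "mu - (F^2 / 2 - F^2 / E)"] by linarith
  then have "0 < 4 / F^4 * ((mu - (F^2 / 2 - F^2 / E))^2 - (F^2 - F^4 / (F_2d nu)^2))"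
    using \<open>2 < F\<close> by (intro mult_pos_pos divide_pos_pos) auto
  also have "\<dots> = b^2 - 4 * f * (2 * g - 1)"
    unfolding f_def b_def g_def E_def using \<open>2 < F\<close> by (intro sv_discriminant_eq[OF nu, symmetric]) simp
  finally have "4 * f * (2 * g - 1) < b^2"
    by simp
  moreover have "0 < f" "4 * f < 1" "g \<le> 1"
    using \<open>2 < F\<close> mu \<open>0 < E\<close> by (simp_all add: f_def g_def field_simps power_strict_mono[of 2 F 2, simplified])
  ultimately obtain k eta w where "R \<le> k^2 + eta^2" "g < Re w"
    and root: "dispersion_cubic f b ((1 - b^2) / (4 * f) - 1) k eta w = 0"
    using dispersion_cubic_large_roots_right_of by blast
  define lam where "lam = w + (\<i> * of_real k + of_real mu) / of_real E - 1"
  have C0: "(1 - b^2) / (4 * f) - 1 = mu - mu^2 / F^2 - 1"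
    using \<open>2 < F\<close> by (simp add: f_def b_def power2_eq_square field_simps)
  from root[unfolded C0]
  have "dispersion_cubic (1 / F^2) (1 - 2 * mu / F^2) (mu - mu^2 / F^2 - 1) k eta w = 0"
    unfolding f_def b_def .
  then have "disp_root nu F mu k eta lam"
    using \<open>2 < F\<close> F(2) by (simp add: disp_root_iff_dispersion_cubic[OF nu, of F] lam_def E_def)
  moreover have "0 < Re lam"
    using \<open>g < Re w\<close> by (simp add: lam_def g_def)
  ultimately show ?thesis
    using \<open>R \<le> k^2 + eta^2\<close> by blast
qed

lemma stable_mu_window:
  assumes nu: "1 < nu" and F: "2 < F" "F < F_2d nu"
    and mu: "mu \<in> {F^2/2 - F^2 / F_exist nu - F / F_2d nu * sqrt ((F_2d nu)^2 - F^2)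
      <..<F^2/2 - F^2 / F_exist nu + F / F_2d nu * sqrt ((F_2d nu)^2 - F^2)}"
  shows "0 < mu" and "(mu - (F^2 / 2 - F^2 / F_exist nu))^2 < F^2 - F^4 / (F_2d nu)^2"
proof -
  define E D c0 r where "E = F_exist nu" and "D = F_2d nu" and "c0 = F^2 / 2 - F^2 / E"
    and "r = F / D * sqrt (D^2 - F^2)"
  have "2 < E" "0 < D" "D^2 = E^2 / (E - 1)"
    using F_exist_gt_2[OF nu] F_2d_pos[OF nu] F_2d_sq[OF nu] by (simp_all add: E_def D_def)
  have "F^2 < D^2"
    using F by (intro power_strict_mono) (auto simp: D_def)
  then have r2: "r^2 = F^2 - F^4 / D^2"
    using \<open>0 < D\<close> by (simp add: r_def power_mult_distrib power_divide field_simps power4_eq_xxxx power2_eq_square)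
  have "\<bar>mu - c0\<bar> < r"
    using mu by (simp add: c0_def r_def E_def D_def abs_less_iff)
  then have "\<bar>mu - c0\<bar>^2 < r^2"
    by (intro power_strict_mono) auto
  then show "(mu - (F^2 / 2 - F^2 / F_exist nu))^2 < F^2 - F^4 / (F_2d nu)^2"
    by (simp add: r2 c0_def E_def D_def)
  have "F^2 / E \<le> F^2 / 2"
    using \<open>2 < E\<close> by (intro divide_left_mono) auto
  then have "0 \<le> c0"
    by (simp add: c0_def)
  have "2^2 \<le> F^2"
    using F by (intro power_mono) auto
  then have "0 \<le> F^2 * (F^2 / 4 - 1)"
    by simp
  moreover have "c0^2 - r^2 = F^2 * (F^2 / 4 - 1)"
    using \<open>2 < E\<close> unfolding r2 c0_def \<open>D^2 = E^2 / (E - 1)\<close>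
    by (simp add: power2_eq_square power4_eq_xxxx field_simps)
  ultimately have "r^2 \<le> c0^2"
    by linarith
  then have "r \<le> c0"
    using \<open>0 \<le> c0\<close> by (rule power2_le_imp_le)
  then show "0 < mu"
    using \<open>\<bar>mu - c0\<bar> < r\<close> by linarith
qed

lemma disp_roots_stable_below_F_2d:
  assumes nu: "1 < nu" and F: "2 < F" "F < F_2d nu"
    and mu: "(mu - (F^2 / 2 - F^2 / F_exist nu))^2 < F^2 - F^4 / (F_2d nu)^2"
  shows "\<exists>R>0. \<forall>k eta. R \<le> k^2 + eta^2 \<longrightarrow> (\<forall>lam. disp_root nu F mu k eta lam \<longrightarrow> Re lam < 0)"
proof -
  define E f b g where "E = F_exist nu" and "f = 1 / F^2" and "b = 1 - 2 * mu / F^2"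
    and "g = 1 - mu / E"
  have "F \<noteq> E"
    using F F_2d_less_F_exist[OF nu] by (simp add: E_def)
  have "0 < f"
    using F by (simp add: f_def)
  have "b^2 - 4 * f * (2 * g - 1) = 4 / F^4 * ((mu - (F^2 / 2 - F^2 / E))^2 - (F^2 - F^4 / (F_2d nu)^2))"
    unfolding f_def b_def g_def E_def using F by (intro sv_discriminant_eq[OF nu]) simp
  also have "\<dots> < 0"
    using F mu by (intro mult_pos_neg divide_pos_pos) (auto simp: E_def)
  finally have b: "b^2 < 4 * f * (2 * g - 1)"
    by simp
  then have "0 < 4 * f * (2 * g - 1)"
    using zero_le_power2[of b] by linarith
  then have "0 < 2 * g - 1"
    using \<open>0 < f\<close> by (simp add: zero_less_mult_iff)
  then obtain R where "0 < R" and R: "\<forall>k eta. R \<le> k^2 + eta^2 \<longrightarrow>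
      (\<forall>w. dispersion_cubic f b (mu - mu^2 / F^2 - 1) k eta w = 0 \<longrightarrow> Re w < g)"
    using dispersion_cubic_roots_left_of[OF \<open>0 < f\<close> _ b] by blast
  have "Re lam < 0" if "R \<le> k^2 + eta^2" and "disp_root nu F mu k eta lam" for k eta lam
  proof -
    define w where "w = lam - (\<i> * of_real k + of_real mu) / of_real E + 1"
    have "dispersion_cubic f b (mu - mu^2 / F^2 - 1) k eta w = 0"
      using that(2) F \<open>F \<noteq> E\<close>
      by (simp add: disp_root_iff_dispersion_cubic[OF nu] w_def f_def b_def E_def)
    then have "Re w < g"
      using R that(1) by blast
    then show ?thesis
      by (simp add: w_def g_def)
  qed
  then show ?thesis
    using \<open>0 < R\<close> by blast
qed

theorem mainTheorem5:
  fixes nu :: real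
  assumes "nu > 1"
  shows
   "(\<forall>F. F_2d nu < F \<and> F < F_exist nu \<longrightarrow>
       (\<forall>mu \<ge> 0. \<forall>R > 0. \<exists>k eta. k^2 + eta^2 \<ge> R \<and>
          (\<exists>lam. disp_root nu F mu k eta lam \<and> Re lam > 0)))
    \<and>
    (\<forall>F. 2 < F \<and> F < F_2d nu \<longrightarrow>
       (let lo = F^2/2 - F^2 / F_exist nu - F / F_2d nu * sqrt ((F_2d nu)^2 - F^2);
            hi = F^2/2 - F^2 / F_exist nu + F / F_2d nu * sqrt ((F_2d nu)^2 - F^2)
        in {lo<..<hi} \<subseteq> {0<..} \<and>
           (\<forall>mu \<in> {lo<..<hi}. \<exists>R > 0. \<forall>k eta. k^2 + eta^2 \<ge> R \<longrightarrow>
              (\<forall>lam. disp_root nu F mu k eta lam \<longrightarrow> Re lam < 0))))"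
  unfolding Let_def
  using disp_roots_unstable_above_F_2d[OF assms] stable_mu_window[OF assms]
    disp_roots_stable_below_F_2d[OF assms]
  by (intro conjI allI impI ballI subsetI) auto

end
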